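(* For all integers $i\ge0$, $j\ge0$, $n\ge0$ and $k\ge1$, $$\sum_{\substack{C\in\mathcal R_{\rm dec}:\ \|C\|=i+1,\ d_{j+1}=1\\ \nu_{j+1}(C)=n,\ b(C)=j+1}}\hat a_C\,\omega_{\hat C}\;=\;\sum_{\substack{C\in\mathcal R_{\rm dec}:\ \|C\|=i+k,\ d_{j+1}=k\\ \nu_{j+1}(C)=n,\ b(C)=j+1}}\hat a_C\,\omega_{\hat C}.$$
   Context: Fix a commutative $\mathbb Q$-algebra $A$, an integer $s$, and elements $a_{k,i}\in A$ ($k\ge1$, $i\ge0$). For $y$ and $n\ge0$, $\binom{y}{n}=y(y-1)\cdots(y-n+1)/n!$. Chord diagrams. A rooted chord diagram of size $n$ is a fixed-point-free involution $C$ of $\{1,\dots,2n\}$, viewed as $n$ chords (transpositions) $(x\,y)$ with $x<y$; the chord containing $1$ is the root chord; $|C|=n$. Chords $(x\,y),(x'\,y')$ cross if $x<x'<y<y'$ or $x'<x<y'<y$. $C$ is connected if the graph whose vertices are the chords, with edges joining crossing chords, is connected. For a set of $m$ chords with $2m$ distinct positive integer endpoints, $\mathrm{norm}$ of it is the chord diagram on $\{1,\dots,2m\}$ obtained by replacing each endpoint by its rank among the $2m$ endpoints. Intersection order. The chords of a rooted connected chord diagram of size $n$ are labeled $1,\dots,n$ recursively: the root chord gets the first available label; the remaining chords split into connected components (w.r.t. crossing); the components are processed in increasing order of their smallest endpoint, each regarded as a rooted connected chord diagram rooted at its chord with smallest endpoint and labeled recursively with the next block of consecutive labels. "Chord $i$"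 means the chord with label $i$. Terminal and base chords. Chord $i$ is terminal if it crosses no chord $j$ with $j>i$. If $t_0<t_1<\dots<t_m$ are the terminal labels, the base chord is $b(C)=t_0$. Insertion of chord diagrams. For $C$ of size $n$ with chords $(x_1y_1),\dots,(x_ny_n)$, root $(x_1y_1)$ ($x_1=1$), $D$ of size $m$ with chords $(x'_iy'_i)$, and $1\le k\le 2m-1$, $C\circ_kD$ is the chord diagram of size $n+m$ with chords $(1,y_1+k)$, $(x_i+k,y_i+k)$ ($2\le i\le n$), $(H(x'_i),H(y'_i))$ ($1\le i\le m$), where $H(x)=x+1$ if $x\le k$ and $H(x)=x+2n$ otherwise. Root share decomposition. For rooted connected $C$ with $|C|\ge2$, let $C_1$ be the connected component (of the chords other than the root) having the smallest endpoint among such components. There is a unique $i$ with $C=C'\circ_iC''$, where $C'=\mathrm{norm}(C\setminus C_1)$, $C''=\mathrm{norm}(C_1)$. Trees. Trees are rooted plane binary trees (every non-leaf vertex has a left and a right child) with labeled leaves. For such $T,T'$ with $T'$ having $\ell$ leaves and $1\le k\le2\ell-1$: add a virtual edge above the root of $T'$, number it $1$, and number the other $2\ell-2$ edges $2,3,\dots$ in pre-order of their lower endpoints (left subtree before right). $T\circ_kT'$ is obtained by subdividing edge $k$ of $T'$ by a new vertex $v$, making the part of $T'$ below edge $k$ the right subtree of $v$ and $T$ the left subtree of $v$; leaf labels are kept. Insertion tree. If $|C|=1$, $T(C)$ is a single vertex labeled by the label of its chord; if $|C|\ge2$ with root share decomposition $C=C'\circ_iC''$, then $T(C)=T(C')\circ_iT(C'')$,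 where the leaves of $T(C'),T(C'')$ carry the intersection-order labels in $C$ of the corresponding chords. Branch-left vector. For a leaf $v$, $\nu_v$ is the number of edges in the path starting at $v$ and repeatedly moving to the parent as long as the current vertex is a right child. $\nu_i(C)$ is $\nu_v$ for the leaf $v$ of $T(C)$ labeled $i$. Decorations. A decorated chord diagram is a rooted connected chord diagram with a positive integer $d_i$ on each chord $i$; $\|C\|=\sum_id_i$; $\mathcal R_{\rm dec}$ is the set of all of them. Weight and monomial. $\omega_{\hat C}=\prod_{i\ne b(C)}\binom{sd_i+\nu_i(C)-2}{\nu_i(C)}$. With terminal labels $t_0<\dots<t_m$, $\hat a_C=\prod_{c=1}^m a_{d_{t_c},t_c-t_{c-1}}\cdot\prod_{i\text{ non-terminal}}a_{d_i,0}$. *)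

theory Defs
  imports Main
begin

type_synonym chord = "nat \<times> nat"

definition endpts :: "chord set \<Rightarrow> nat set" where
  "endpts S = fst ` S \<union> snd ` S"

definition is_cd :: "chord set \<Rightarrow> nat \<Rightarrow> bool" where
  "is_cd C n \<longleftrightarrow> finite C \<and> card C = n \<and> (\<forall>(x,y)\<in>C. x < y) \<and> endpts C = {1..2*n}"

definition crosses :: "chord \<Rightarrow> chord \<Rightarrow> bool" where
  "crosses c c' \<longleftrightarrow> (case c of (x,y) \<Rightarrow> case c' of (x',y') \<Rightarrow>
      (x < x' \<and> x' < y \<and> y < y') \<or> (x' < x \<and> x < y' \<and> y' < y))"

definition cross_rel :: "chord set \<Rightarrow> chord rel" where
  "cross_rel S = {(c,c'). c \<in> S \<and> c' \<in> S \<and> crosses c c'}"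

definition cd_connected :: "chord set \<Rightarrow> bool" where
  "cd_connected S \<longleftrightarrow> (\<forall>c\<in>S. \<forall>c'\<in>S. (c,c') \<in> (cross_rel S)\<^sup>*)"

text \<open>Rooted connected chord diagram of size n (n \<ge> 1 so that there is a root chord).\<close>
definition rcd :: "chord set \<Rightarrow> nat \<Rightarrow> bool" where
  "rcd C n \<longleftrightarrow> is_cd C n \<and> n \<ge> 1 \<and> cd_connected C"

definition minep :: "chord set \<Rightarrow> nat" where
  "minep S = Min (endpts S)"

definition root :: "chord set \<Rightarrow> chord" where
  "root S = (THE c. c \<in> S \<and> fst c = minep S)"

definition comp :: "chord set \<Rightarrow> chord \<Rightarrow> chord set" where
  "comp S c = {c' \<in> S. (c,c') \<in> (cross_rel S)\<^sup>*}"

definition components :: "chord set \<Rightarrow> chord set set" where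
  "components S = comp S ` S"

definition sorted_comps :: "chord set \<Rightarrow> chord set list" where
  "sorted_comps S = map (\<lambda>e. THE K. K \<in> components S \<and> minep K = e)
                        (sorted_list_of_set (minep ` components S))"

inductive io_lab :: "chord set \<Rightarrow> chord list \<Rightarrow> bool" where
  "S \<noteq> {} \<Longrightarrow> r = root S \<Longrightarrow> list_all2 io_lab (sorted_comps (S - {r})) Ls
     \<Longrightarrow> io_lab S (r # concat Ls)"

definition io_order :: "chord set \<Rightarrow> chord list" where
  "io_order C = (THE L. io_lab C L)"

definition chord_lab :: "chord set \<Rightarrow> nat \<Rightarrow> chord" where
  "chord_lab C i = io_order C ! (i - 1)"

definition terminal :: "chord set \<Rightarrow> nat \<Rightarrow> bool" where
  "terminal C i \<longleftrightarrow> \<not> (\<exists>j. i < j \<and> j \<le> card C \<and> crosses (chord_lab C i) (chord_lab C j))"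

definition terminals :: "chord set \<Rightarrow> nat set" where
  "terminals C = {i \<in> {1..card C}. terminal C i}"

definition base :: "chord set \<Rightarrow> nat" where
  "base C = Min (terminals C)"

definition cins :: "chord set \<Rightarrow> nat \<Rightarrow> chord set \<Rightarrow> chord set" where
  "cins C k D = (let n = card C; H = (\<lambda>x. if x \<le> k then x + 1 else x + 2 * n) in
      {(1, snd (root C) + k)} \<union> {(x + k, y + k) | x y. (x,y) \<in> C - {root C}}
      \<union> {(H x, H y) | x y. (x,y) \<in> D})"

definition rank :: "nat set \<Rightarrow> nat \<Rightarrow> nat" where
  "rank E x = card {e \<in> E. e \<le> x}"

definition norm :: "chord set \<Rightarrow> chord set" where
  "norm S = (\<lambda>(x,y). (rank (endpts S) x, rank (endpts S) y)) ` S"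

definition first_comp :: "chord set \<Rightarrow> chord set" where
  "first_comp S = hd (sorted_comps (S - {root S}))"

definition rs_index :: "chord set \<Rightarrow> nat" where
  "rs_index S = (THE i. 1 \<le> i \<and> i \<le> 2 * card (first_comp S) - 1 \<and>
       norm S = cins (norm (S - first_comp S)) i (norm (first_comp S)))"

datatype 'a btree = Leaf 'a | Node "'a btree" "'a btree"

fun nverts :: "'a btree \<Rightarrow> nat" where
  "nverts (Leaf _) = 1"
| "nverts (Node l r) = 1 + nverts l + nverts r"

text \<open>graft T k T' = T o_k T': edge k of T' (edges numbered 1 = virtual edge above the root,
  then by pre-order of lower endpoints, i.e. edge k lies above the k-th vertex in pre-order)
  is subdivided by a new vertex with left subtree T and right subtree the part below edge k.\<close>
fun graft :: "'a btree \<Rightarrow> nat \<Rightarrow> 'a btree \<Rightarrow> 'a btree" where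
  "graft T k (Leaf a) = (if k = 1 then Node T (Leaf a) else Leaf a)"
| "graft T k (Node l r) =
     (if k = 1 then Node T (Node l r)
      else if k - 1 \<le> nverts l then Node (graft T (k - 1) l) r
      else Node l (graft T (k - 1 - nverts l) r))"

text \<open>Insertion tree; leaves carry the chords of the original diagram (identifying the chords
  of norm(S') and norm(S_1) with the corresponding chords of S).\<close>
inductive ins_tree :: "chord set \<Rightarrow> chord btree \<Rightarrow> bool" where
  leaf: "ins_tree {c} (Leaf c)"
| node: "card S \<ge> 2 \<Longrightarrow> ins_tree (S - first_comp S) T1 \<Longrightarrow> ins_tree (first_comp S) T2
     \<Longrightarrow> ins_tree S (graft T1 (rs_index S) T2)"

definition T_of :: "chord set \<Rightarrow> chord btree" where
  "T_of C = (THE T. ins_tree C T)"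

text \<open>nus c t: pairs (leaf, nu_leaf); c is the number of edges of the maximal chain of
  right-child steps ending at the current vertex.\<close>
fun nus :: "nat \<Rightarrow> 'a btree \<Rightarrow> ('a \<times> nat) list" where
  "nus c (Leaf a) = [(a, c)]"
| "nus c (Node l r) = nus 0 l @ nus (c + 1) r"

definition nu_leaf :: "'a btree \<Rightarrow> 'a \<Rightarrow> nat" where
  "nu_leaf t a = (THE m. (a, m) \<in> set (nus 0 t))"

definition nu :: "chord set \<Rightarrow> nat \<Rightarrow> nat" where
  "nu C i = nu_leaf (T_of C) (chord_lab C i)"

text \<open>A decorated diagram is (C, ds) with d_i = ds ! (i-1).\<close>
definition Rdec :: "(chord set \<times> nat list) set" where
  "Rdec = {(C, ds). \<exists>n. rcd C n \<and> length ds = n \<and> (\<forall>d \<in> set ds. d \<ge> 1)}"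

definition dnorm :: "nat list \<Rightarrow> nat" where
  "dnorm ds = sum_list ds"

text \<open>binom y n = y(y-1)...(y-n+1)/n! for an integer y; the division is exact (the result is an
  integer), so it is computed in int and then mapped into A.\<close>
definition binom_int :: "int \<Rightarrow> nat \<Rightarrow> int" where
  "binom_int y m = (\<Prod>t<m. y - int t) div fact m"

definition omega :: "int \<Rightarrow> chord set \<Rightarrow> nat list \<Rightarrow> 'a::comm_ring_1" where
  "omega s C ds = (\<Prod>i \<in> {1..card C} - {base C}.
      of_int (binom_int (s * int (ds ! (i - 1)) + int (nu C i) - 2) (nu C i)))"

definition ahat :: "(nat \<Rightarrow> nat \<Rightarrow> 'a::comm_ring_1) \<Rightarrow> chord set \<Rightarrow> nat list \<Rightarrow> 'a" where
  "ahat a C ds = (let ts = sorted_list_of_set (terminals C) in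
      (\<Prod>c \<in> {1..<length ts}. a (ds ! (ts ! c - 1)) (ts ! c - ts ! (c - 1)))
    * (\<Prod>i \<in> {1..card C} - terminals C. a (ds ! (i - 1)) 0))"

end

theory Submission
  imports Defs
begin

text \<open>The base chord is the first terminal chord, so it is excluded from the weight and its
  decoration does not enter the monomial either (terminal chords contribute only for
  t_1, ..., t_m). Hence overwriting d_{b(C)} is a bijection between the two index sets
  that preserves every summand.\<close>

lemma terminal_card: "terminal C (card C)"
  unfolding terminal_def by auto

lemma base_mem_terminals:
  assumes "card C \<ge> 1"
  shows "base C \<in> terminals C"
proof -
  have "card C \<in> terminals C"
    using assms terminal_card unfolding terminals_def by auto
  moreover have "finite (terminals C)"
    unfolding terminals_def by simp
  ultimately show ?thesis
    unfolding base_def by (metis Min_in empty_iff)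
qed

lemma Rdec_length: "(C, ds) \<in> Rdec \<Longrightarrow> length ds = card C \<and> card C \<ge> 1"
  unfolding Rdec_def rcd_def is_cd_def by auto

lemma Rdec_list_update: "(C, ds) \<in> Rdec \<Longrightarrow> v \<ge> 1 \<Longrightarrow> (C, ds[j := v]) \<in> Rdec"
  unfolding Rdec_def using set_update_subset_insert by fastforce

lemma omega_list_update_base:
  assumes "base C = j + 1"
  shows "omega s C (ds[j := v]) = omega s C ds"
  unfolding omega_def by (rule prod.cong) (use assms in auto)

lemma ahat_list_update_base:
  assumes "card C \<ge> 1" and base: "base C = j + 1"
  shows "ahat a C (ds[j := v]) = ahat a C ds"
proof -
  define ts where "ts = sorted_list_of_set (terminals C)"
  have fin: "finite (terminals C)"
    unfolding terminals_def by simp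
  have sorted: "sorted_wrt (<) ts" and set_ts: "set ts = terminals C"
    unfolding ts_def using fin by (simp_all add: strict_sorted_list_of_set)
  have "ts \<noteq> []"
    using set_ts base_mem_terminals[OF assms(1)] by auto
  then have "base C \<le> ts ! 0"
    unfolding base_def using fin set_ts by (metis Min_le length_greater_0_conv nth_mem)
  then have later_terminals: "j \<noteq> ts ! c - 1" if "c \<in> {1..<length ts}" for c
    using that sorted sorted_wrt_nth_less[of "(<)" ts 0 c] base by fastforce
  have "j + 1 \<in> terminals C"
    using base_mem_terminals[OF assms(1)] base by simp
  then have non_terminals: "j \<noteq> i - 1" if "i \<in> {1..card C} - terminals C" for i
    using that by auto
  show ?thesis
    unfolding ahat_def Let_def ts_def[symmetric]
    using later_terminals non_terminals by (intro arg_cong2[where f = "(*)"] prod.cong) auto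
qed

lemma sum_base_decoration_eq:
  fixes a :: "nat \<Rightarrow> nat \<Rightarrow> 'a::comm_ring_1"
  assumes "v \<ge> 1" and "w \<ge> 1"
  shows "(\<Sum>(C, ds) \<in> {(C, ds) \<in> Rdec. dnorm ds = m + v \<and> ds ! j = v \<and>
              nu C (j + 1) = n \<and> base C = j + 1}. ahat a C ds * omega s C ds)
       = (\<Sum>(C, ds) \<in> {(C, ds) \<in> Rdec. dnorm ds = m + w \<and> ds ! j = w \<and>
              nu C (j + 1) = n \<and> base C = j + 1}. ahat a C ds * omega s C ds)"
    (is "sum ?f (?S v) = sum ?f (?S w)")
proof -
  have maps_to: "(C, ds[j := w']) \<in> ?S w'" if "(C, ds) \<in> ?S v'" "w' \<ge> 1" for C ds v' w'
  proof -
    from that have R: "(C, ds) \<in> Rdec" and base: "base C = j + 1"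
      and "dnorm ds = m + v'" "ds ! j = v'" "nu C (j + 1) = n" by auto
    moreover have "j < length ds"
      using Rdec_length[OF R] base_mem_terminals[of C] base unfolding terminals_def by auto
    ultimately show ?thesis
      using Rdec_list_update[OF R \<open>w' \<ge> 1\<close>] by (simp add: dnorm_def sum_list_update)
  qed
  have bij: "bij_betw (\<lambda>(C, ds). (C, ds[j := w])) (?S v) (?S w)"
    by (rule bij_betw_byWitness[where f' = "\<lambda>(C, ds). (C, ds[j := v])"])
       (use maps_to assms in auto)
  have "?f (C, ds[j := w]) = ?f (C, ds)" if "(C, ds) \<in> ?S v" for C ds
    using that Rdec_length[of C ds]
    by (simp add: ahat_list_update_base omega_list_update_base)
  then have "sum ?f (?S v) = sum (?f \<circ> (\<lambda>(C, ds). (C, ds[j := w]))) (?S v)"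
    by (intro sum.cong) auto
  also have "\<dots> = sum ?f (?S w)"
    using sum.reindex_bij_betw[OF bij] by (simp add: comp_def)
  finally show ?thesis .
qed

theorem mainTheorem7:
  fixes a :: "nat \<Rightarrow> nat \<Rightarrow> 'a::comm_ring_1" and s :: int and i j n k :: nat
  assumes Qalg: "\<forall>m::nat. m > 0 \<longrightarrow> (\<exists>x::'a. of_nat m * x = 1)"
    and k: "k \<ge> 1"
  shows "(\<Sum>(C, ds) \<in> {(C, ds) \<in> Rdec. dnorm ds = i + 1 \<and> ds ! j = 1 \<and>
              nu C (j + 1) = n \<and> base C = j + 1}. ahat a C ds * omega s C ds)
       = (\<Sum>(C, ds) \<in> {(C, ds) \<in> Rdec. dnorm ds = i + k \<and> ds ! j = k \<and>
              nu C (j + 1) = n \<and> base C = j + 1}. ahat a C ds * omega s C ds)"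
  \<comment> \<open>The identity holds over any commutative ring.\<close>
  using sum_base_decoration_eq[of 1 k] k by simp

end
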